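(* Let $x\in\Gamma_0$ be such that for all $i,j,k,l$ in the same connected component of $G_x$ with $x_{ij}>0$ and $x_{kl}>0$ one has $a_{ij}p_{ij}=a_{kl}p_{kl}$. If property $P_{G_x}$ does not hold, then $G_x$ has at least one connected component in which every vertex belongs to at least two edges of $G_x$.
   Context: Let $G=(\mathbb{V},E)$ be a finite graph with adjacency $\sim$. Let $a_{ij}=a_{ji}\ge0$ ($>0$ only if $i\sim j$) and $p_{ij}=p_{ji}\in[0,1]$ ($=0$ if $i\not\sim j$), with some $a_{ij}p_{ij}>0$. Fix $h_1\in(0,1]$; $\Delta$ is the set of arrays $x=(x_{ij})$ with $x_{ij}=x_{ji}\ge0$, $x_{ij}=0$ if $i\not\sim j$, $\sum_{i,j}x_{ij}=1$, $\sum_{(i,j):a_{ij}p_{ij}>0}x_{ij}\ge h_1$; $x_i=\sum_jx_{ij}$. $\partial\Delta$: the $x\in\Delta$ for which some vertex $i$ having a neighbour $j$ with $a_{ij}p_{ij}>0$ has $\sum_{j:a_{ij}p_{ij}>0}x_{ij}=0$. $H(x)=\sum_{(i,j):x_{ij}>0}a_{ij}p_{ij}x_{ij}^2/(x_ix_j)$; $F(x)_{ij}=x_{ij}\big(a_{ij}p_{ij}\frac{x_{ij}}{x_ix_j}-H(x)\big)$ ($F_{ij}=0$ if $x_{ij}=0$; the fraction is $0$ if $a_{ij}p_{ij}=0$); $\Gamma=\{x\in\Delta:F(x)=0\}$, $\Gamma_0=\Gamma\cap(\Delta\setminus\partial\Delta)$. $G_x$: subgraph with vertex set $\mathbb{V}$,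 $i,j$ adjacent iff $x_{ij}>0$. For a subgraph $\mathcal{G}$ of $G$ (vertex set $\mathbb{V}$), property $P_{\mathcal{G}}$ means: (1) all edges $\{i,j\}$ of $\mathcal{G}$ lying in a same connected component have the same value $a_{ij}p_{ij}$, and it is $>0$; (2) each connected component contains at most one vertex with several neighbours; (3) a vertex $i$ lies on an edge of $\mathcal{G}$ iff $a_{ij}p_{ij}>0$ for some $j\sim i$. *)

theory Defs
  imports Complex_Main
begin

definition setting :: "'v set \<Rightarrow> ('v \<Rightarrow> 'v \<Rightarrow> bool) \<Rightarrow> ('v \<Rightarrow> 'v \<Rightarrow> real) \<Rightarrow> ('v \<Rightarrow> 'v \<Rightarrow> real) \<Rightarrow> bool" where
  "setting V adj a p \<longleftrightarrow>
     finite V \<and>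
     (\<forall>i j. adj i j \<longrightarrow> i \<in> V \<and> j \<in> V) \<and>
     (\<forall>i j. adj i j \<longleftrightarrow> adj j i) \<and> (\<forall>i. \<not> adj i i) \<and>
     (\<forall>i j. a i j = a j i \<and> 0 \<le> a i j \<and> (0 < a i j \<longrightarrow> adj i j)) \<and>
     (\<forall>i j. p i j = p j i \<and> 0 \<le> p i j \<and> p i j \<le> 1 \<and> (\<not> adj i j \<longrightarrow> p i j = 0)) \<and>
     (\<exists>i\<in>V. \<exists>j\<in>V. 0 < a i j * p i j)"

definition Delta :: "'v set \<Rightarrow> ('v \<Rightarrow> 'v \<Rightarrow> bool) \<Rightarrow> ('v \<Rightarrow> 'v \<Rightarrow> real) \<Rightarrow> ('v \<Rightarrow> 'v \<Rightarrow> real) \<Rightarrow> real \<Rightarrow> ('v \<Rightarrow> 'v \<Rightarrow> real) set" where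
  "Delta V adj a p h1 = {x.
     (\<forall>i j. x i j = x j i \<and> 0 \<le> x i j \<and> (\<not> adj i j \<longrightarrow> x i j = 0)) \<and>
     (\<Sum>i\<in>V. \<Sum>j\<in>V. x i j) = 1 \<and>
     h1 \<le> (\<Sum>(i,j)\<in>{(i,j). i \<in> V \<and> j \<in> V \<and> 0 < a i j * p i j}. x i j)}"

definition vsum :: "'v set \<Rightarrow> ('v \<Rightarrow> 'v \<Rightarrow> real) \<Rightarrow> 'v \<Rightarrow> real" where
  "vsum V x i = (\<Sum>j\<in>V. x i j)"

definition bdry :: "'v set \<Rightarrow> ('v \<Rightarrow> 'v \<Rightarrow> bool) \<Rightarrow> ('v \<Rightarrow> 'v \<Rightarrow> real) \<Rightarrow> ('v \<Rightarrow> 'v \<Rightarrow> real) \<Rightarrow> real \<Rightarrow> ('v \<Rightarrow> 'v \<Rightarrow> real) set" where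
  "bdry V adj a p h1 = {x \<in> Delta V adj a p h1.
     \<exists>i\<in>V. (\<exists>j. adj i j \<and> 0 < a i j * p i j) \<and>
       (\<Sum>j\<in>{j \<in> V. 0 < a i j * p i j}. x i j) = 0}"

definition Hfun :: "'v set \<Rightarrow> ('v \<Rightarrow> 'v \<Rightarrow> real) \<Rightarrow> ('v \<Rightarrow> 'v \<Rightarrow> real) \<Rightarrow> ('v \<Rightarrow> 'v \<Rightarrow> real) \<Rightarrow> real" where
  "Hfun V a p x = (\<Sum>(i,j)\<in>{(i,j). i \<in> V \<and> j \<in> V \<and> 0 < x i j}.
      a i j * p i j * (x i j)^2 / (vsum V x i * vsum V x j))"

definition Ffun :: "'v set \<Rightarrow> ('v \<Rightarrow> 'v \<Rightarrow> real) \<Rightarrow> ('v \<Rightarrow> 'v \<Rightarrow> real) \<Rightarrow> ('v \<Rightarrow> 'v \<Rightarrow> real) \<Rightarrow> 'v \<Rightarrow> 'v \<Rightarrow> real" where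
  "Ffun V a p x i j = (if x i j = 0 then 0 else
      x i j * ((if a i j * p i j = 0 then 0 else a i j * p i j * x i j / (vsum V x i * vsum V x j))
               - Hfun V a p x))"

definition Gamma :: "'v set \<Rightarrow> ('v \<Rightarrow> 'v \<Rightarrow> bool) \<Rightarrow> ('v \<Rightarrow> 'v \<Rightarrow> real) \<Rightarrow> ('v \<Rightarrow> 'v \<Rightarrow> real) \<Rightarrow> real \<Rightarrow> ('v \<Rightarrow> 'v \<Rightarrow> real) set" where
  "Gamma V adj a p h1 = {x \<in> Delta V adj a p h1. \<forall>i\<in>V. \<forall>j\<in>V. Ffun V a p x i j = 0}"

definition Gamma0 :: "'v set \<Rightarrow> ('v \<Rightarrow> 'v \<Rightarrow> bool) \<Rightarrow> ('v \<Rightarrow> 'v \<Rightarrow> real) \<Rightarrow> ('v \<Rightarrow> 'v \<Rightarrow> real) \<Rightarrow> real \<Rightarrow> ('v \<Rightarrow> 'v \<Rightarrow> real) set" where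
  "Gamma0 V adj a p h1 = Gamma V adj a p h1 \<inter> (Delta V adj a p h1 - bdry V adj a p h1)"

definition Gx :: "('v \<Rightarrow> 'v \<Rightarrow> real) \<Rightarrow> 'v \<Rightarrow> 'v \<Rightarrow> bool" where
  "Gx x i j \<longleftrightarrow> 0 < x i j"

definition same_comp :: "('v \<Rightarrow> 'v \<Rightarrow> bool) \<Rightarrow> 'v \<Rightarrow> 'v \<Rightarrow> bool" where
  "same_comp E u w \<longleftrightarrow> E\<^sup>*\<^sup>* u w"

definition degree :: "'v set \<Rightarrow> ('v \<Rightarrow> 'v \<Rightarrow> bool) \<Rightarrow> 'v \<Rightarrow> nat" where
  "degree V E i = card {j \<in> V. E i j}"

definition propP :: "'v set \<Rightarrow> ('v \<Rightarrow> 'v \<Rightarrow> bool) \<Rightarrow> ('v \<Rightarrow> 'v \<Rightarrow> real) \<Rightarrow> ('v \<Rightarrow> 'v \<Rightarrow> real) \<Rightarrow> ('v \<Rightarrow> 'v \<Rightarrow> bool) \<Rightarrow> bool" where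
  "propP V adj a p E \<longleftrightarrow>
     (\<forall>i j k l. E i j \<and> E k l \<and> same_comp E i k \<longrightarrow>
        a i j * p i j = a k l * p k l \<and> 0 < a i j * p i j) \<and>
     (\<forall>u\<in>V. \<forall>w\<in>V. same_comp E u w \<and> 2 \<le> degree V E u \<and> 2 \<le> degree V E w \<longrightarrow> u = w) \<and>
     (\<forall>i\<in>V. (\<exists>j. E i j) \<longleftrightarrow> (\<exists>j. adj i j \<and> 0 < a i j * p i j))"

end

theory Submission
  imports Defs
begin

text \<open>At an interior equilibrium every edge \<open>ij\<close> of \<open>G\<^sub>x\<close> is balanced:
  \<open>a\<^sub>i\<^sub>j p\<^sub>i\<^sub>j x\<^sub>i\<^sub>j = H x\<^sub>i x\<^sub>j\<close> with \<open>H > 0\<close> and \<open>a\<^sub>i\<^sub>j p\<^sub>i\<^sub>j > 0\<close>. If a component contains a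
  leaf \<open>l\<close> with neighbour \<open>j\<close>, then \<open>x\<^sub>l = x\<^sub>l\<^sub>j\<close> gives \<open>a p = H x\<^sub>j\<close> for the common weight
  \<open>a p\<close> of the component, and balancing any other edge \<open>mj\<close> yields \<open>x\<^sub>m\<^sub>j = x\<^sub>m\<close>, so
  \<open>m\<close> is a leaf too: the component is a star centred at \<open>j\<close>. Hence if every component
  has a vertex of degree below two, every component has at most one branch vertex, and
  together with balance (clause 1) and interiority (clause 3) this is property \<open>P\<close>.\<close>

definition uniform_component_weights ::
    "'v set \<Rightarrow> ('v \<Rightarrow> 'v \<Rightarrow> real) \<Rightarrow> ('v \<Rightarrow> 'v \<Rightarrow> real) \<Rightarrow> ('v \<Rightarrow> 'v \<Rightarrow> real) \<Rightarrow> bool" where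
  "uniform_component_weights V a p x \<longleftrightarrow>
     (\<forall>i j k l. i \<in> V \<and> j \<in> V \<and> k \<in> V \<and> l \<in> V \<and>
        same_comp (Gx x) i j \<and> same_comp (Gx x) i k \<and> same_comp (Gx x) i l \<and>
        0 < x i j \<and> 0 < x k l \<longrightarrow> a i j * p i j = a k l * p k l)"

lemma degree_le_1_if_neighbours_subset:
  assumes "{t \<in> V. E m t} \<subseteq> {j}"
  shows "degree V E m \<le> 1"
  using card_mono[OF _ assms] unfolding degree_def by simp

lemma star_component_reachable:
  assumes leaves: "\<And>m t. E j m \<Longrightarrow> E m t \<Longrightarrow> t = j"
    and "E\<^sup>*\<^sup>* j y"
  shows "y = j \<or> E j y"
  using \<open>E\<^sup>*\<^sup>* j y\<close>
proof (induction rule: rtranclp_induct)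
  case (step y z)
  then show ?case using leaves by blast
qed simp

lemma star_component_branch_vertex:
  assumes "symp E"
    and leaves: "\<And>m t. E j m \<Longrightarrow> E m t \<Longrightarrow> t = j"
    and "E\<^sup>*\<^sup>* u j" and "2 \<le> degree V E u"
  shows "u = j"
proof (rule ccontr)
  assume "u \<noteq> j"
  have "E\<^sup>*\<^sup>* j u" using assms(3) \<open>symp E\<close> by (meson symp_rtranclp sympD)
  with leaves have "u = j \<or> E j u" by (rule star_component_reachable)
  with \<open>u \<noteq> j\<close> have "E j u" by simp
  then have "{t \<in> V. E u t} \<subseteq> {j}" using leaves by blast
  then have "degree V E u \<le> 1" by (rule degree_le_1_if_neighbours_subset)
  with assms(4) show False by simp
qed

locale interior_equilibrium =
  fixes V :: "'v set" and adj :: "'v \<Rightarrow> 'v \<Rightarrow> bool"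
    and a p x :: "'v \<Rightarrow> 'v \<Rightarrow> real" and h1 :: real
  assumes setting: "setting V adj a p"
    and equilibrium: "x \<in> Gamma0 V adj a p h1"
begin

abbreviation H :: real where "H \<equiv> Hfun V a p x"

lemma finite_V: "finite V"
  using setting unfolding setting_def by blast

lemma weight_nonneg: "0 \<le> a i j * p i j"
  using setting unfolding setting_def by simp

lemma weight_sym: "a i j * p i j = a j i * p j i"
  using setting unfolding setting_def by simp

lemma in_Delta: "x \<in> Delta V adj a p h1"
  using equilibrium unfolding Gamma0_def by blast

lemma x_sym: "x i j = x j i"
  using in_Delta unfolding Delta_def by blast

lemma x_nonneg: "0 \<le> x i j"
  using in_Delta unfolding Delta_def by blast

lemma Gx_symp: "symp (Gx x)"
  unfolding symp_def Gx_def by (simp add: x_sym)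

lemma edge_in_V:
  assumes "0 < x i j"
  shows "i \<in> V" "j \<in> V"
proof -
  have "adj i j" using assms in_Delta unfolding Delta_def by force
  then show "i \<in> V" "j \<in> V" using setting unfolding setting_def by blast+
qed

lemma x_le_vsum: "j \<in> V \<Longrightarrow> x i j \<le> vsum V x i"
  unfolding vsum_def using finite_V x_nonneg by (intro member_le_sum) auto

lemma vsum_pos: "0 < x i j \<Longrightarrow> 0 < vsum V x i"
  using x_le_vsum edge_in_V(2) by (meson less_le_trans)

lemma vsum_eq_unique_edge:
  assumes "j \<in> V" and "\<And>t. 0 < x l t \<Longrightarrow> t = j"
  shows "vsum V x l = x l j"
proof -
  have "x l t = 0" if "t \<in> V - {j}" for t
    using assms(2)[of t] x_nonneg[of l t] that by force
  then have "vsum V x l = (\<Sum>t\<in>{j}. x l t)"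
    unfolding vsum_def using assms(1) by (intro sum.mono_neutral_right finite_V) auto
  then show ?thesis by simp
qed

lemma vsum_ge_two_edges:
  assumes "j \<in> V" "t \<in> V" "t \<noteq> j"
  shows "x m j + x m t \<le> vsum V x m"
proof -
  have "(\<Sum>s\<in>{j, t}. x m s) \<le> vsum V x m"
    unfolding vsum_def using finite_V assms x_nonneg by (intro sum_mono2) auto
  then show ?thesis using assms(3) by simp
qed

text \<open>Interiority alone provides such an edge.\<close>
lemma has_weighted_edge: "\<exists>i j. 0 < x i j \<and> 0 < a i j * p i j"
proof -
  obtain i j where ij: "i \<in> V" "0 < a i j * p i j"
    using setting unfolding setting_def by blast
  have "a i j \<noteq> 0" using ij(2) by auto
  then have "adj i j" using setting unfolding setting_def by (auto simp: less_le)
  have "(\<Sum>j\<in>{j \<in> V. 0 < a i j * p i j}. x i j) \<noteq> 0"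
    using equilibrium ij \<open>adj i j\<close> unfolding Gamma0_def bdry_def by blast
  then obtain j' where "0 < a i j' * p i j'" "x i j' \<noteq> 0"
    by (metis (mono_tags, lifting) mem_Collect_eq sum.neutral)
  then show ?thesis using x_nonneg[of i j'] by (auto simp: less_le)
qed

lemma H_pos: "0 < H"
proof -
  let ?T = "{(i,j). i \<in> V \<and> j \<in> V \<and> 0 < x i j}"
  let ?f = "\<lambda>(i,j). a i j * p i j * (x i j)^2 / (vsum V x i * vsum V x j)"
  obtain i j where ij: "0 < x i j" "0 < a i j * p i j" using has_weighted_edge by blast
  have vsum_nonneg: "0 \<le> vsum V x k" for k
    unfolding vsum_def by (simp add: sum_nonneg x_nonneg)
  have "?f (i, j) \<le> (\<Sum>q\<in>?T. ?f q)"
  proof (rule member_le_sum)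
    show "(i, j) \<in> ?T" using ij(1) edge_in_V[OF ij(1)] by simp
    have "?T \<subseteq> V \<times> V" by blast
    then show "finite ?T" by (rule finite_subset) (simp add: finite_V)
    show "0 \<le> ?f q" for q
      by (cases q) (simp add: weight_nonneg vsum_nonneg mult_nonneg_nonneg divide_nonneg_nonneg)
  qed
  then have "?f (i, j) \<le> H" unfolding Hfun_def by simp
  moreover have "0 < ?f (i, j)"
  proof -
    have "0 < vsum V x i" "0 < vsum V x j"
      using vsum_pos[OF ij(1)] vsum_pos[of j i] x_sym[of i j] ij(1) by auto
    then show ?thesis using ij by (simp add: divide_pos_pos)
  qed
  ultimately show ?thesis by linarith
qed

lemma edge_balance:
  assumes "0 < x i j"
  shows "0 < a i j * p i j" and "a i j * p i j * x i j = H * vsum V x i * vsum V x j"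
proof -
  have vi: "0 < vsum V x i" and vj: "0 < vsum V x j"
    using vsum_pos[OF assms] vsum_pos[of j i] assms x_sym[of i j] by auto
  have "Ffun V a p x i j = 0"
    using equilibrium edge_in_V[OF assms] unfolding Gamma0_def Gamma_def by blast
  then have eq: "(if a i j * p i j = 0 then 0
                  else a i j * p i j * x i j / (vsum V x i * vsum V x j)) = H"
    using assms unfolding Ffun_def by (simp split: if_splits)
  then have "a i j * p i j \<noteq> 0" using H_pos by auto
  then show "0 < a i j * p i j" using weight_nonneg by (simp add: less_le)
  show "a i j * p i j * x i j = H * vsum V x i * vsum V x j"
    using eq \<open>a i j * p i j \<noteq> 0\<close> vi vj by (simp add: field_simps)
qed

lemma has_edge_iff:
  assumes "i \<in> V"
  shows "(\<exists>j. Gx x i j) \<longleftrightarrow> (\<exists>j. adj i j \<and> 0 < a i j * p i j)"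
proof
  assume "\<exists>j. Gx x i j"
  then obtain j where "0 < x i j" unfolding Gx_def by blast
  moreover have "adj i j" using calculation in_Delta unfolding Delta_def by force
  ultimately show "\<exists>j. adj i j \<and> 0 < a i j * p i j" using edge_balance(1) by blast
next
  assume "\<exists>j. adj i j \<and> 0 < a i j * p i j"
  then have "(\<Sum>j\<in>{j \<in> V. 0 < a i j * p i j}. x i j) \<noteq> 0"
    using equilibrium assms unfolding Gamma0_def bdry_def by blast
  then obtain j where "x i j \<noteq> 0" by (metis sum.neutral)
  then show "\<exists>j. Gx x i j" using x_nonneg[of i j] unfolding Gx_def by (auto simp: less_le)
qed

lemma uniform_component_weightsD:
  assumes "uniform_component_weights V a p x"
    and "0 < x i j" "0 < x k l" "same_comp (Gx x) i k"
  shows "a i j * p i j = a k l * p k l"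
proof -
  have "same_comp (Gx x) i j" "same_comp (Gx x) i l"
    using assms(2-4) unfolding same_comp_def Gx_def
    by (auto intro: r_into_rtranclp rtranclp.rtrancl_into_rtrancl)
  then show ?thesis
    using assms edge_in_V unfolding uniform_component_weights_def by blast
qed

lemma neighbours_of_leaf_neighbour_are_leaves:
  assumes leaf: "\<And>t. 0 < x l t \<Longrightarrow> t = j" and "0 < x l j"
    and "0 < x j m" and same_weight: "a m j * p m j = a l j * p l j"
    and "0 < x m t"
  shows "t = j"
proof (rule ccontr)
  assume "t \<noteq> j"
  let ?c = "a l j * p l j"
  have xmj: "0 < x m j" using \<open>0 < x j m\<close> x_sym by simp
  have "?c * x l j = (H * vsum V x j) * x l j"
    using edge_balance(2)[OF \<open>0 < x l j\<close>] vsum_eq_unique_edge[OF edge_in_V(2) leaf]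
      \<open>0 < x l j\<close> by (simp add: algebra_simps)
  then have c: "?c = H * vsum V x j" using \<open>0 < x l j\<close> by simp
  have "?c * x m j = ?c * vsum V x m"
    using edge_balance(2)[OF xmj] same_weight c by (simp add: algebra_simps)
  moreover have "?c \<noteq> 0" using edge_balance(1)[OF \<open>0 < x l j\<close>] by linarith
  ultimately have "x m j = vsum V x m" by (metis mult_left_cancel)
  moreover have "x m j + x m t \<le> vsum V x m"
    using vsum_ge_two_edges edge_in_V(2) xmj \<open>0 < x m t\<close> \<open>t \<noteq> j\<close> by blast
  ultimately show False using \<open>0 < x m t\<close> by simp
qed

lemma leaf_has_unique_neighbour:
  assumes "Gx x y l" and "degree V (Gx x) l < 2"
  obtains j where "0 < x l j" and "\<And>t. 0 < x l t \<Longrightarrow> t = j"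
proof -
  have "0 < x l y" using assms(1) x_sym unfolding Gx_def by simp
  then have "{t \<in> V. Gx x l t} \<noteq> {}" using edge_in_V(2) unfolding Gx_def by blast
  moreover have "card {t \<in> V. Gx x l t} \<le> 1" using assms(2) unfolding degree_def by simp
  moreover have "finite {t \<in> V. Gx x l t}" using finite_V by simp
  ultimately obtain j where "{t \<in> V. Gx x l t} = {j}"
    by (metis card_0_eq card_1_singletonE le_Suc_eq One_nat_def le_zero_eq)
  then show ?thesis using that edge_in_V(2) unfolding Gx_def by blast
qed

lemma unique_branch_vertex:
  assumes uniform: "uniform_component_weights V a p x"
    and "same_comp (Gx x) u w"
    and "2 \<le> degree V (Gx x) u" "2 \<le> degree V (Gx x) w"
    and "same_comp (Gx x) u l" "degree V (Gx x) l < 2"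
  shows "u = w"
proof -
  let ?E = "Gx x"
  have ul: "?E\<^sup>*\<^sup>* u l" using assms(5) unfolding same_comp_def .
  have "u \<noteq> l" using assms(3,6) by auto
  with ul obtain y where "?E y l" by (cases rule: rtranclp.cases) auto
  obtain j where lj: "0 < x l j" and leaf: "\<And>t. 0 < x l t \<Longrightarrow> t = j"
    by (rule leaf_has_unique_neighbour[OF \<open>?E y l\<close> assms(6)]) blast
  have "?E l j" using lj unfolding Gx_def .
  with ul have uj: "?E\<^sup>*\<^sup>* u j" by (rule rtranclp.rtrancl_into_rtrancl)
  have "?E\<^sup>*\<^sup>* w u"
    using assms(2) Gx_symp unfolding same_comp_def by (meson symp_rtranclp sympD)
  then have wj: "?E\<^sup>*\<^sup>* w j" using uj by (rule rtranclp_trans)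
  have leaves: "t = j" if "?E j m" "?E m t" for m t
  proof (rule neighbours_of_leaf_neighbour_are_leaves[OF leaf lj])
    show jm: "0 < x j m" and "0 < x m t" using that unfolding Gx_def by auto
    have "0 < x j l" "0 < x m j" using lj jm x_sym by simp_all
    moreover have "same_comp ?E j m" using that(1) unfolding same_comp_def by simp
    ultimately have "a j l * p j l = a m j * p m j"
      by (rule uniform_component_weightsD[OF uniform])
    then show "a m j * p m j = a l j * p l j" using weight_sym by simp
  qed
  have "u = j" using Gx_symp leaves uj assms(3) by (rule star_component_branch_vertex)
  moreover have "w = j" using Gx_symp leaves wj assms(4) by (rule star_component_branch_vertex)
  ultimately show "u = w" by simp
qed

end

theorem lemma11:
  fixes V :: "'v set" and adj :: "'v \<Rightarrow> 'v \<Rightarrow> bool"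
    and a p x :: "'v \<Rightarrow> 'v \<Rightarrow> real" and h1 :: real
  assumes "setting V adj a p"
    and "0 < h1" and "h1 \<le> 1"
    and "x \<in> Gamma0 V adj a p h1"
    and "\<forall>i j k l. i \<in> V \<and> j \<in> V \<and> k \<in> V \<and> l \<in> V \<and>
           same_comp (Gx x) i j \<and> same_comp (Gx x) i k \<and> same_comp (Gx x) i l \<and>
           0 < x i j \<and> 0 < x k l \<longrightarrow> a i j * p i j = a k l * p k l"
    and "\<not> propP V adj a p (Gx x)"
  shows "\<exists>v\<in>V. \<forall>u\<in>V. same_comp (Gx x) v u \<longrightarrow> 2 \<le> degree V (Gx x) u"
proof (rule ccontr)
  assume no_such_component: "\<not> ?thesis"
  interpret interior_equilibrium V adj a p x h1
    using assms(1,4) by unfold_locales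
  have uniform: "uniform_component_weights V a p x"
    using assms(5) unfolding uniform_component_weights_def .
  have "\<forall>u\<in>V. \<forall>w\<in>V. same_comp (Gx x) u w \<and> 2 \<le> degree V (Gx x) u \<and> 2 \<le> degree V (Gx x) w
          \<longrightarrow> u = w"
    using unique_branch_vertex[OF uniform] no_such_component by (meson not_le)
  moreover have "a i j * p i j = a k l * p k l \<and> 0 < a i j * p i j"
    if "Gx x i j" "Gx x k l" "same_comp (Gx x) i k" for i j k l
    using that uniform_component_weightsD[OF uniform] edge_balance(1) unfolding Gx_def by blast
  ultimately have "propP V adj a p (Gx x)"
    unfolding propP_def using has_edge_iff by blast
  with assms(6) show False ..
qed

end
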